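(* The price function $p$ is concave (resp. convex) on $Q$ if and only if $r$ is concave (resp. convex) on $\big(\overline p(q_h),\overline p(q_\ell)\big)$.
   Context: Let $0<q_\ell<q_h<\infty$, $Q=[q_\ell,q_h]$, and let $c$ be a real number with $0<c<q_\ell$. Let $F$ be a probability distribution on $[0,1]$ with support $[0,1]$ admitting a twice continuously differentiable density $f:(0,1)\to\mathbb{R}_{>0}$. Define $r(v)=(1-F(v))/f(v)$ and $\psi(v)=v-r(v)$ on $(0,1)$, and assume $\psi'(v)>0$ whenever $\psi(v)>0$. For $q\in Q$, $p(q)$ is the unique maximizer over $p\in\mathbb{R}$ of $(p-c)\big(1-F(p/q)\big)$, and $\overline p(q)=p(q)/q$. *)

theory Defs
  imports "HOL-Analysis.Analysis"
begin

definition inv_hazard :: "(real \<Rightarrow> real) \<Rightarrow> (real \<Rightarrow> real) \<Rightarrow> real \<Rightarrow> real" where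
  "inv_hazard F f v = (1 - F v) / f v"

definition virt_val :: "(real \<Rightarrow> real) \<Rightarrow> (real \<Rightarrow> real) \<Rightarrow> real \<Rightarrow> real" where
  "virt_val F f v = v - inv_hazard F f v"

definition opt_price :: "(real \<Rightarrow> real) \<Rightarrow> real \<Rightarrow> real \<Rightarrow> real" where
  "opt_price F c q = (THE p. \<forall>p'. (p' - c) * (1 - F (p' / q)) \<le> (p - c) * (1 - F (p / q)))"

definition norm_price :: "(real \<Rightarrow> real) \<Rightarrow> real \<Rightarrow> real \<Rightarrow> real" where
  "norm_price F c q = opt_price F c q / q"

definition C2_on :: "real set \<Rightarrow> (real \<Rightarrow> real) \<Rightarrow> bool" where
  "C2_on S g \<longleftrightarrow> (\<exists>g1 g2. (\<forall>x\<in>S. (g has_real_derivative g1 x) (at x)) \<and>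
      (\<forall>x\<in>S. (g1 has_real_derivative g2 x) (at x)) \<and> continuous_on S g2)"

end

theory Submission
  imports Defs
begin

text \<open>
  Write v(q) = p(q)/q. The first-order condition of the pricing problem reads psi(v(q)) = c/q,
  and psi increases strictly once it is positive, so v(q) = g(c/q) for the inverse g of psi and
  p(q) = q g(c/q). Thus p is a perspective of g, which is convex (concave) on [ql, qh] exactly
  when g is convex (concave) on [c/qh, c/ql]. The inverse of an increasing function is concave
  iff the function is convex, psi = id - r is convex iff r is concave, and since r is
  continuous, concavity on [v(qh), v(ql)] is the same as concavity on its interior.
\<close>

lemma convex_on_cong:
  assumes "\<And>x. x \<in> S \<Longrightarrow> f x = g x"
  shows "convex_on S f \<longleftrightarrow> convex_on S g"
  using assms by (auto simp: convex_on_def convex_def)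

lemma concave_on_cong:
  assumes "\<And>x. x \<in> S \<Longrightarrow> f x = g x"
  shows "concave_on S f \<longleftrightarrow> concave_on S g"
  unfolding concave_on_def using assms by (intro convex_on_cong) simp

lemma convex_on_perspective:
  fixes g :: "real \<Rightarrow> real"
  assumes A: "convex A" "A \<subseteq> {0<..}" and AB: "\<And>q. q \<in> A \<Longrightarrow> c / q \<in> B"
    and g: "convex_on B g"
  shows "convex_on A (\<lambda>q. q * g (c / q))"
proof (rule convex_onI[OF _ A(1)])
  fix t x y :: real
  assume t: "0 < t" "t < 1" and x: "x \<in> A" and y: "y \<in> A"
  have "x > 0" "y > 0" using A x y by auto
  define q where "q = (1 - t) * x + t * y"
  have "q > 0" unfolding q_def using t \<open>x > 0\<close> \<open>y > 0\<close> by (simp add: add_pos_pos)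
  define l where "l = t * y / q"
  have l: "0 \<le> l" "l \<le> 1" "1 - l = (1 - t) * x / q"
    using t \<open>x > 0\<close> \<open>y > 0\<close> \<open>q > 0\<close> by (auto simp: l_def q_def field_simps)
  \<comment> \<open>c/q is a convex combination of c/x and c/y, with weights proportional to (1 - t) x and t y\<close>
  have "c / q = (1 - l) * (c / x) + l * (c / y)"
    unfolding l(3) l_def using \<open>q > 0\<close> \<open>x > 0\<close> \<open>y > 0\<close>
    by (simp add: field_simps) (simp add: q_def algebra_simps)
  then have "g (c / q) \<le> (1 - l) * g (c / x) + l * g (c / y)"
    using convex_onD[OF g l(1,2), of "c / x" "c / y"] AB x y by simp
  then have "q * g (c / q) \<le> q * ((1 - l) * g (c / x) + l * g (c / y))"
    using \<open>q > 0\<close> by (simp add: mult_left_mono)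
  also have "\<dots> = (1 - t) * (x * g (c / x)) + t * (y * g (c / y))"
    using \<open>q > 0\<close> unfolding l(3) by (simp add: l_def field_simps)
  finally show "((1 - t) *\<^sub>R x + t *\<^sub>R y) * g (c / ((1 - t) *\<^sub>R x + t *\<^sub>R y))
      \<le> (1 - t) * (x * g (c / x)) + t * (y * g (c / y))"
    by (simp add: q_def)
qed

lemma convex_on_perspective_iff:
  fixes g :: "real \<Rightarrow> real"
  assumes "0 < c" "0 < a" "a \<le> b"
  shows "convex_on {a..b} (\<lambda>q. q * g (c / q)) \<longleftrightarrow> convex_on {c/b..c/a} g"
proof
  have pos: "{c/b..c/a} \<subseteq> {0<..}" using assms by (auto intro: less_le_trans[of 0 "c/b"])
  have maps: "c / u \<in> {a..b}" if "u \<in> {c/b..c/a}" for u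
    using that pos assms by (auto simp: field_simps)
  assume "convex_on {a..b} (\<lambda>q. q * g (c / q))"
  then have "convex_on {c/b..c/a} (\<lambda>u. u * ((c / u) * g (c / (c / u))))"
    by (intro convex_on_perspective[OF convex_real_interval(5) pos maps])
  then have "convex_on {c/b..c/a} (\<lambda>u. c * g u)"
    using pos \<open>0 < c\<close> by (subst (asm) convex_on_cong[where g = "\<lambda>u. c * g u"]) auto
  then show "convex_on {c/b..c/a} g"
    using convex_on_cdiv[of c _ "\<lambda>u. c * g u"] \<open>0 < c\<close> by simp
next
  assume "convex_on {c/b..c/a} g"
  then show "convex_on {a..b} (\<lambda>q. q * g (c / q))"
    using assms by (intro convex_on_perspective[OF convex_real_interval(5)])
      (auto simp: frac_le divide_left_mono)
qed

lemma concave_on_perspective_iff: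
  fixes g :: "real \<Rightarrow> real"
  assumes "0 < c" "0 < a" "a \<le> b"
  shows "concave_on {a..b} (\<lambda>q. q * g (c / q)) \<longleftrightarrow> concave_on {c/b..c/a} g"
  using convex_on_perspective_iff[OF assms, of "\<lambda>x. - g x"] by (simp add: concave_on_def)

lemma concave_on_inverse_if_convex_on:
  fixes g h :: "real \<Rightarrow> real"
  assumes g: "convex_on K g" and J: "convex J"
    and maps: "g ` K \<subseteq> J" "h ` J \<subseteq> K"
    and inverse: "\<And>u. u \<in> J \<Longrightarrow> g (h u) = u" "\<And>x. x \<in> K \<Longrightarrow> h (g x) = x"
    and h: "mono_on J h"
  shows "concave_on J h"
proof (rule concave_on_linorderI[OF _ J])
  fix t u w :: real
  assume t: "0 < t" "t < 1" and u: "u \<in> J" and w: "w \<in> J"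
  define x where "x = (1 - t) * h u + t * h w"
  have "h u \<in> K" "h w \<in> K" using maps u w by auto
  then have "x \<in> K"
    using convex_on_imp_convex[OF g] t unfolding x_def convex_alt by simp
  have "(1 - t) * u + t * w \<in> J" using J u w t unfolding convex_alt by simp
  moreover have "g x \<le> (1 - t) * u + t * w"
    using convex_onD[OF g, of t "h u" "h w"] maps u w t inverse(1) by (auto simp: x_def)
  ultimately have "h (g x) \<le> h ((1 - t) * u + t * w)"
    using h maps \<open>x \<in> K\<close> by (auto intro: mono_onD)
  then show "(1 - t) * h u + t * h w \<le> h ((1 - t) *\<^sub>R u + t *\<^sub>R w)"
    using inverse(2)[OF \<open>x \<in> K\<close>] by (simp add: x_def)
qed

lemma convex_on_inverse_if_concave_on:
  fixes g h :: "real \<Rightarrow> real"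
  assumes g: "concave_on K g" and J: "convex J"
    and maps: "g ` K \<subseteq> J" "h ` J \<subseteq> K"
    and inverse: "\<And>u. u \<in> J \<Longrightarrow> g (h u) = u" "\<And>x. x \<in> K \<Longrightarrow> h (g x) = x"
    and h: "mono_on J h"
  shows "convex_on J h"
proof (rule convex_onI[OF _ J])
  fix t u w :: real
  assume t: "0 < t" "t < 1" and u: "u \<in> J" and w: "w \<in> J"
  define x where "x = (1 - t) * h u + t * h w"
  have "h u \<in> K" "h w \<in> K" using maps u w by auto
  then have "x \<in> K"
    using concave_on_imp_convex[OF g] t unfolding x_def convex_alt by simp
  have "(1 - t) * u + t * w \<in> J" using J u w t unfolding convex_alt by simp
  moreover have "(1 - t) * u + t * w \<le> g x"
    using concave_onD[OF g, of t "h u" "h w"] maps u w t inverse(1) by (auto simp: x_def)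
  ultimately have "h ((1 - t) * u + t * w) \<le> h (g x)"
    using h maps \<open>x \<in> K\<close> by (auto intro: mono_onD)
  then show "h ((1 - t) *\<^sub>R u + t *\<^sub>R w) \<le> (1 - t) * h u + t * h w"
    using inverse(2)[OF \<open>x \<in> K\<close>] by (simp add: x_def)
qed

lemma concave_on_inverse_iff:
  fixes g h :: "real \<Rightarrow> real"
  assumes "convex J" "convex K"
    and maps: "g ` K \<subseteq> J" "h ` J \<subseteq> K"
    and inverse: "\<And>u. u \<in> J \<Longrightarrow> g (h u) = u" "\<And>x. x \<in> K \<Longrightarrow> h (g x) = x"
    and mono: "mono_on J h" "mono_on K g"
  shows "concave_on J h \<longleftrightarrow> convex_on K g" and "convex_on J h \<longleftrightarrow> concave_on K g"
  using concave_on_inverse_if_convex_on[of K g J h] concave_on_inverse_if_convex_on[of J h K g]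
    convex_on_inverse_if_concave_on[of K g J h] convex_on_inverse_if_concave_on[of J h K g]
    assms by blast+

lemma convex_on_Icc_iff_Ioo:
  fixes f :: "real \<Rightarrow> real"
  assumes "a < b" and f: "continuous_on {a..b} f"
  shows "convex_on {a..b} f \<longleftrightarrow> convex_on {a<..<b} f"
proof
  assume "convex_on {a..b} f"
  then show "convex_on {a<..<b} f" by (rule convex_on_subset) auto
next
  assume f_Ioo: "convex_on {a<..<b} f"
  show "convex_on {a..b} f"
  proof (rule convex_onI[OF _ convex_real_interval(5)])
    fix t x y :: real
    assume t: "0 < t" "t < 1" and x: "x \<in> {a..b}" and y: "y \<in> {a..b}"
    \<comment> \<open>the affine contraction T e towards the midpoint maps {a..b} into {a<..<b};
      let it tend to the identity\<close>
    define m where "m = (a + b) / 2"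
    define T where "T e z = (1 - e) * z + e * m" for e z :: real
    have T_Ioo: "T e z \<in> {a<..<b}" if "0 < e" "e \<le> 1" "z \<in> {a..b}" for e z
    proof -
      have "(1 - e) * a \<le> (1 - e) * z" "(1 - e) * z \<le> (1 - e) * b" "e * a < e * m" "e * m < e * b"
        using that \<open>a < b\<close> by (auto intro!: mult_left_mono simp: m_def)
      then show ?thesis by (auto simp: T_def algebra_simps)
    qed
    have T_Icc: "T e z \<in> {a..b}" if "0 \<le> e" "e \<le> 1" "z \<in> {a..b}" for e z
      using T_Ioo[of e z] that by (cases "e = 0") (auto simp: T_def)
    let ?z = "(1 - t) * x + t * y"
    have z: "?z \<in> {a..b}" using convex_real_interval(5)[of a b] x y t unfolding convex_alt by simp
    have T_comb: "T e ?z = (1 - t) * T e x + t * T e y" for e by (simp add: T_def algebra_simps)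
    define h where "h e = (1 - t) * f (T e x) + t * f (T e y) - f (T e ?z)" for e
    have "continuous_on {0..1} h"
      unfolding h_def T_def using x y z T_Icc
      by (intro continuous_intros continuous_on_compose2[OF f]) (auto simp: T_def)
    then have "(h \<longlongrightarrow> h 0) (at_right 0)" by (rule continuous_on_Icc_at_rightD) simp
    moreover have "eventually (\<lambda>e. 0 \<le> h e) (at_right 0)"
      using eventually_at_right_real[OF zero_less_one]
    proof (rule eventually_mono)
      fix e :: real assume "e \<in> {0<..<1}"
      then show "0 \<le> h e"
        using convex_onD[OF f_Ioo, of t "T e x" "T e y"] T_Ioo x y t
        by (simp add: h_def T_comb)
    qed
    ultimately have "0 \<le> h 0" by (intro tendsto_lowerbound) auto
    then show "f ((1 - t) *\<^sub>R x + t *\<^sub>R y) \<le> (1 - t) * f x + t * f y"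
      by (simp add: h_def T_def)
  qed
qed

lemma concave_on_Icc_iff_Ioo:
  fixes f :: "real \<Rightarrow> real"
  assumes "a < b" and "continuous_on {a..b} f"
  shows "concave_on {a..b} f \<longleftrightarrow> concave_on {a<..<b} f"
  unfolding concave_on_def using assms by (intro convex_on_Icc_iff_Ioo continuous_intros)

lemma convex_on_diff_ident_iff:
  fixes r :: "real \<Rightarrow> real"
  shows "convex_on K (\<lambda>v. v - r v) \<longleftrightarrow> concave_on K r"
    and "concave_on K (\<lambda>v. v - r v) \<longleftrightarrow> convex_on K r"
proof -
  have ident: "convex_on K (\<lambda>v. v)" "concave_on K (\<lambda>v. v)" if "convex K"
    using that by (simp_all add: convex_on_ident concave_on_ident)
  show "convex_on K (\<lambda>v. v - r v) \<longleftrightarrow> concave_on K r"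
  proof
    assume "convex_on K (\<lambda>v. v - r v)"
    from concave_on_diff[OF ident(2)[OF convex_on_imp_convex[OF this]] this]
    show "concave_on K r" by simp
  next
    assume "concave_on K r"
    from convex_on_diff[OF ident(1)[OF concave_on_imp_convex[OF this]] this]
    show "convex_on K (\<lambda>v. v - r v)" .
  qed
  show "concave_on K (\<lambda>v. v - r v) \<longleftrightarrow> convex_on K r"
  proof
    assume "concave_on K (\<lambda>v. v - r v)"
    from convex_on_diff[OF ident(1)[OF concave_on_imp_convex[OF this]] this]
    show "convex_on K r" by simp
  next
    assume "convex_on K r"
    from concave_on_diff[OF ident(2)[OF convex_on_imp_convex[OF this]] this]
    show "concave_on K (\<lambda>v. v - r v)" .
  qed
qed

lemma DERIV_pos_where_pos_imp_less:
  fixes f :: "real \<Rightarrow> real"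
  assumes "a < b" and f: "continuous_on {a..b} f" and "0 < f a"
    and deriv: "\<And>x. a < x \<Longrightarrow> x < b \<Longrightarrow> 0 < f x \<Longrightarrow> \<exists>d. DERIV f x :> d \<and> 0 < d"
  shows "f a < f b"
proof -
  have pos: "0 < f x" if x: "x \<in> {a..b}" for x
  proof (rule ccontr)
    assume "\<not> 0 < f x"
    define Z where "Z = {a..b} \<inter> f -` {..0}"
    have "x \<in> Z" using x \<open>\<not> 0 < f x\<close> by (simp add: Z_def)
    have "compact Z"
    proof (rule compact_eq_bounded_closed[THEN iffD2, OF conjI])
      show "bounded Z" by (rule bounded_subset[of "{a..b}"]) (auto simp: Z_def)
      show "closed Z"
        unfolding Z_def by (rule continuous_closed_preimage[OF f closed_atLeastAtMost closed_atMost])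
    qed
    moreover have "Z \<noteq> {}" using \<open>x \<in> Z\<close> by blast
    ultimately obtain z where z: "z \<in> Z" and z_min: "\<forall>y\<in>Z. z \<le> y"
      using compact_attains_inf by blast
    have z_ab: "a \<le> z" "z \<le> b" and "f z \<le> 0" using z by (simp_all add: Z_def)
    have "z \<noteq> a" using \<open>f z \<le> 0\<close> \<open>0 < f a\<close> by auto
    with z_ab have "a < z" by simp
    have "f a < f z"
    proof (rule DERIV_pos_imp_increasing_open[OF \<open>a < z\<close>])
      fix y assume y: "a < y" "y < z"
      have "y \<notin> Z" using z_min y(2) by force
      then have "0 < f y" using y z_ab by (simp add: Z_def)
      then show "\<exists>d. DERIV f y :> d \<and> 0 < d" using deriv[of y] y z_ab by simp
    next
      show "continuous_on {a..z} f" using f by (rule continuous_on_subset) (simp add: z_ab)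
    qed
    then show False using \<open>f z \<le> 0\<close> \<open>0 < f a\<close> by simp
  qed
  show ?thesis
  proof (rule DERIV_pos_imp_increasing_open[OF \<open>a < b\<close> _ f])
    fix x assume "a < x" "x < b"
    then show "\<exists>d. DERIV f x :> d \<and> 0 < d" using deriv[of x] pos[of x] by simp
  qed
qed

definition profit :: "(real \<Rightarrow> real) \<Rightarrow> real \<Rightarrow> real \<Rightarrow> real \<Rightarrow> real" where
  "profit F c q p = (p - c) * (1 - F (p / q))"

text \<open>For 0 < s < 1 the root exists and is unique (\<open>virt_val_inv_spec\<close>);
  elsewhere the value is unspecified.\<close>
definition virt_val_inv :: "(real \<Rightarrow> real) \<Rightarrow> (real \<Rightarrow> real) \<Rightarrow> real \<Rightarrow> real" where
  "virt_val_inv F f s = (THE v. v \<in> {0<..<1} \<and> virt_val F f v = s)"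

lemma opt_price_altdef:
  "opt_price F c q = (THE p. \<forall>p'. profit F c q p' \<le> profit F c q p)"
  by (simp add: opt_price_def profit_def)

locale valuation_distribution =
  fixes F f :: "real \<Rightarrow> real"
  assumes F_cont: "continuous_on UNIV F"
    and F_below: "\<And>x. x \<le> 0 \<Longrightarrow> F x = 0"
    and F_above: "\<And>x. 1 \<le> x \<Longrightarrow> F x = 1"
    and F_dens: "\<And>x. x \<in> {0<..<1} \<Longrightarrow> (F has_real_derivative f x) (at x)"
    and f_pos: "\<And>x. x \<in> {0<..<1} \<Longrightarrow> f x > 0"
begin

lemma F_less_one:
  assumes "x < 1"
  shows "F x < 1"
proof (cases "x \<le> 0")
  case False
  have "F x < F 1"
  proof (rule DERIV_pos_imp_increasing_open[OF assms])
    fix z assume "x < z" "z < 1"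
    then have "z \<in> {0<..<1}" using False by simp
    then show "\<exists>d. DERIV F z :> d \<and> d > 0" using F_dens f_pos by blast
  qed (rule continuous_on_subset[OF F_cont], simp)
  then show ?thesis using F_above[of 1] by simp
qed (simp add: F_below)

lemma F_le_one: "F x \<le> 1"
  using F_less_one[of x] F_above[of x] by (cases "x < 1") auto

lemma profit_maximiser_exists:
  assumes "0 < c" "c < q"
  shows "\<exists>p. \<forall>p'. profit F c q p' \<le> profit F c q p"
proof -
  have "continuous_on {c..q} (profit F c q)"
    unfolding profit_def[abs_def]
    by (intro continuous_intros continuous_on_compose2[OF F_cont]) (use assms in auto)
  moreover have "{c..q} \<noteq> {}" using assms by simp
  ultimately obtain p where p_max: "\<forall>p'\<in>{c..q}. profit F c q p' \<le> profit F c q p"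
    using continuous_attains_sup[OF compact_Icc] by blast
  have outside: "profit F c q p' \<le> 0" if "p' \<notin> {c..q}" for p'
  proof (cases "p' < c")
    case True
    then show ?thesis using F_le_one[of "p' / q"] by (simp add: profit_def mult_nonpos_nonneg)
  next
    case False
    with that have "1 \<le> p' / q" using assms by simp
    then show ?thesis by (simp add: profit_def F_above)
  qed
  have "0 \<le> profit F c q p"
    using p_max[rule_format, of c] assms by (simp add: profit_def)
  then have "profit F c q p' \<le> profit F c q p" for p'
    using p_max outside[of p'] by (cases "p' \<in> {c..q}") auto
  then show ?thesis by blast
qed

lemma profit_has_real_derivative:
  assumes "0 < q" "p / q \<in> {0<..<1}"
  shows "(profit F c q has_real_derivative (1 - F (p / q)) - (p - c) * f (p / q) / q) (at p)"
proof -
  have scale: "((\<lambda>p. p / q) has_real_derivative 1 / q) (at p)"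
    using assms(1) by (auto intro!: derivative_eq_intros)
  have "((\<lambda>p. F (p / q)) has_real_derivative f (p / q) * (1 / q)) (at p)"
    by (rule DERIV_chain2[where g = "\<lambda>p. p / q", OF F_dens[OF assms(2)] scale])
  then show ?thesis
    unfolding profit_def[abs_def] by (auto intro!: derivative_eq_intros)
qed

lemma profit_maximiser_virt_val:
  assumes "0 < c" "c < q" and p_max: "\<forall>p'. profit F c q p' \<le> profit F c q p"
  shows "p / q \<in> {0<..<1}" "virt_val F f (p / q) = c / q"
proof -
  have "0 < q" using assms by simp
  have "(c + q) / 2 / q < 1" using assms by (simp add: field_simps)
  then have "0 < profit F c q ((c + q) / 2)"
    unfolding profit_def using assms F_less_one by (intro mult_pos_pos) auto
  then have "0 < profit F c q p" using p_max by (meson less_le_trans)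
  then have "c < p" "F (p / q) < 1"
    using F_le_one[of "p / q"] by (auto simp: profit_def zero_less_mult_iff)
  then show v: "p / q \<in> {0<..<1}" using F_above[of "p / q"] \<open>0 < c\<close> \<open>0 < q\<close> by force
  have "(1 - F (p / q)) - (p - c) * f (p / q) / q = 0"
    using DERIV_local_max[OF profit_has_real_derivative[OF \<open>0 < q\<close> v] zero_less_one] p_max by blast
  then have "inv_hazard F f (p / q) = (p - c) / q"
    using f_pos[OF v] by (simp add: inv_hazard_def field_simps)
  then show "virt_val F f (p / q) = c / q"
    using \<open>0 < q\<close> by (simp add: virt_val_def field_simps)
qed

end

locale regular_distribution = valuation_distribution +
  assumes f_C2: "C2_on {0<..<1} f"
    and virt_val_deriv_pos:
      "\<And>v. v \<in> {0<..<1} \<Longrightarrow> virt_val F f v > 0 \<Longrightarrow> deriv (virt_val F f) v > 0"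
begin

lemma inv_hazard_differentiable:
  assumes "v \<in> {0<..<1}"
  shows "inv_hazard F f differentiable (at v)"
proof -
  have "F differentiable (at v)"
    using F_dens[OF assms] by (auto simp: real_differentiable_def)
  moreover have "f differentiable (at v)"
    using f_C2 assms unfolding C2_on_def real_differentiable_def by blast
  ultimately show ?thesis
    unfolding inv_hazard_def[abs_def] using f_pos[OF assms] by (auto intro!: derivative_intros)
qed

lemma virt_val_has_real_derivative:
  assumes "v \<in> {0<..<1}"
  shows "(virt_val F f has_real_derivative deriv (virt_val F f) v) (at v)"
  unfolding DERIV_deriv_iff_real_differentiable virt_val_def[abs_def]
  using inv_hazard_differentiable[OF assms] by (auto intro!: derivative_intros)

lemma virt_val_less:
  assumes "0 < a" "a < b" "b < 1" "0 < virt_val F f a"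
  shows "virt_val F f a < virt_val F f b"
proof (rule DERIV_pos_where_pos_imp_less[where f = "virt_val F f", OF \<open>a < b\<close> _ assms(4)])
  show "continuous_on {a..b} (virt_val F f)"
    using assms
    by (intro continuous_at_imp_continuous_on ballI DERIV_isCont[OF virt_val_has_real_derivative])
      auto
  fix x assume "a < x" "x < b" "0 < virt_val F f x"
  then have "x \<in> {0<..<1}" using assms by simp
  then show "\<exists>d. DERIV (virt_val F f) x :> d \<and> 0 < d"
    using virt_val_has_real_derivative virt_val_deriv_pos \<open>0 < virt_val F f x\<close> by blast
qed

lemma virt_val_inj:
  assumes "v \<in> {0<..<1}" "w \<in> {0<..<1}" "virt_val F f v = virt_val F f w" "0 < virt_val F f v"
  shows "v = w"
  using virt_val_less[of v w] virt_val_less[of w v] assms by (cases v w rule: linorder_cases) auto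

lemma norm_price_virt_val:
  assumes "0 < c" "c < q"
  shows "norm_price F c q \<in> {0<..<1}" "virt_val F f (norm_price F c q) = c / q"
proof -
  obtain p where p: "\<forall>p'. profit F c q p' \<le> profit F c q p"
    using profit_maximiser_exists[OF assms] by blast
  have "opt_price F c q = p"
    unfolding opt_price_altdef
  proof (rule the_equality)
    fix p' assume p': "\<forall>p''. profit F c q p'' \<le> profit F c q p'"
    have "0 < c / q" using assms by simp
    then have "p' / q = p / q"
      using profit_maximiser_virt_val[OF assms p] profit_maximiser_virt_val[OF assms p']
        virt_val_inj[of "p' / q" "p / q"] by simp
    then show "p' = p" using assms by simp
  qed (fact p)
  then show "norm_price F c q \<in> {0<..<1}" "virt_val F f (norm_price F c q) = c / q"
    using profit_maximiser_virt_val[OF assms p] by (simp_all add: norm_price_def)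
qed

lemma virt_val_inv_eq:
  assumes "v \<in> {0<..<1}" "0 < virt_val F f v"
  shows "virt_val_inv F f (virt_val F f v) = v"
  unfolding virt_val_inv_def
proof (rule the_equality)
  fix w assume "w \<in> {0<..<1} \<and> virt_val F f w = virt_val F f v"
  then show "w = v" using virt_val_inj[of w v] assms by simp
qed (use assms in simp)

lemma virt_val_inv_spec:
  assumes "s \<in> {0<..<1}"
  shows "virt_val_inv F f s \<in> {0<..<1}" "virt_val F f (virt_val_inv F f s) = s"
  \<comment> \<open>a root exists because the pricing problem with c = s and q = 1 has a solution\<close>
  using norm_price_virt_val[of s 1] virt_val_inv_eq[of "norm_price F s 1"] assms by auto

lemma opt_price_eq_virt_val_inv:
  assumes "0 < c" "c < q"
  shows "opt_price F c q = q * virt_val_inv F f (c / q)"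
  using norm_price_virt_val[OF assms] virt_val_inv_eq[of "norm_price F c q"] assms
  by (simp add: norm_price_def)

lemma norm_price_eq_virt_val_inv:
  assumes "0 < c" "c < q"
  shows "norm_price F c q = virt_val_inv F f (c / q)"
  using opt_price_eq_virt_val_inv[OF assms] assms by (simp add: norm_price_def)

lemma virt_val_inv_less:
  assumes "0 < s" "s < t" "t < 1"
  shows "virt_val_inv F f s < virt_val_inv F f t"
proof (rule ccontr)
  let ?h = "virt_val_inv F f"
  assume "\<not> ?thesis"
  then consider "?h t = ?h s" | "?h t < ?h s" by fastforce
  then have "virt_val F f (?h t) \<le> virt_val F f (?h s)"
  proof cases
    case 2
    then show ?thesis
      using virt_val_inv_spec[of s] virt_val_inv_spec[of t] assms virt_val_less[of "?h t" "?h s"] by simp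
  qed simp
  then show False using virt_val_inv_spec[of s] virt_val_inv_spec[of t] assms by simp
qed

lemma mono_on_virt_val_inv:
  assumes "0 < s" "t < 1"
  shows "mono_on {s..t} (virt_val_inv F f)"
proof (rule mono_onI)
  fix u w assume "u \<in> {s..t}" "w \<in> {s..t}" "u \<le> w"
  with assms show "virt_val_inv F f u \<le> virt_val_inv F f w"
    using virt_val_inv_less[of u w] by (cases "u = w") simp_all
qed

lemma virt_val_between:
  assumes "0 < s" "s < t" "t < 1" and x: "x \<in> {virt_val_inv F f s..virt_val_inv F f t}"
  shows "x \<in> {0<..<1}" "virt_val F f x \<in> {s..t}"
proof -
  let ?h = "virt_val_inv F f"
  have h_s: "?h s \<in> {0<..<1}" "virt_val F f (?h s) = s"
    and h_t: "?h t \<in> {0<..<1}" "virt_val F f (?h t) = t"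
    using assms virt_val_inv_spec[of s] virt_val_inv_spec[of t] by simp_all
  then show "x \<in> {0<..<1}" using x by auto
  have lower: "s \<le> virt_val F f x"
  proof (cases "x = ?h s")
    case False
    with x h_t have "?h s < x" "x < 1" by auto
    then show ?thesis using virt_val_less[of "?h s" x] h_s assms by simp
  qed (simp add: h_s)
  moreover have "virt_val F f x \<le> t"
  proof (cases "x = ?h t")
    case False
    with x h_s have "0 < x" "x < ?h t" by auto
    then show ?thesis using virt_val_less[of x "?h t"] h_t lower assms by simp
  qed (simp add: h_t)
  ultimately show "virt_val F f x \<in> {s..t}" by simp
qed

lemma concave_on_virt_val_inv_iff:
  assumes "0 < s" "s < t" "t < 1"
  shows "concave_on {s..t} (virt_val_inv F f) \<longleftrightarrow>
      concave_on {virt_val_inv F f s<..<virt_val_inv F f t} (inv_hazard F f)"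
    and "convex_on {s..t} (virt_val_inv F f) \<longleftrightarrow>
      convex_on {virt_val_inv F f s<..<virt_val_inv F f t} (inv_hazard F f)"
proof -
  let ?h = "virt_val_inv F f" and ?psi = "virt_val F f"
  define K where "K = {?h s..?h t}"
  note between = virt_val_between[OF assms, folded K_def]
  have h_maps: "?h ` {s..t} \<subseteq> K"
    using mono_onD[OF mono_on_virt_val_inv[of s t]] assms by (auto simp: K_def)
  have psi_maps: "?psi ` K \<subseteq> {s..t}" using between by auto
  have psi_h: "?psi (?h u) = u" if "u \<in> {s..t}" for u
    using virt_val_inv_spec[of u] that assms by simp
  have h_psi: "?h (?psi x) = x" if "x \<in> K" for x
    using virt_val_inv_eq[of x] between[OF that] assms by simp
  have psi_mono: "mono_on K ?psi"
  proof (rule mono_onI)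
    fix x y assume "x \<in> K" "y \<in> K" "x \<le> y"
    moreover from this have "0 < ?psi x" using between(2)[of x] assms by auto
    ultimately show "?psi x \<le> ?psi y"
      using virt_val_less[of x y] between(1) by (cases "x = y") auto
  qed
  have "convex K" by (simp add: K_def)
  note inverse = concave_on_inverse_iff[OF convex_real_interval(5) this psi_maps h_maps
      psi_h h_psi mono_on_virt_val_inv[OF assms(1,3)] psi_mono]
  have psi_eq: "?psi = (\<lambda>v. v - inv_hazard F f v)"
    by (simp add: virt_val_def[abs_def])
  have "continuous_on K (inv_hazard F f)"
    using between inv_hazard_differentiable
    by (intro continuous_at_imp_continuous_on ballI differentiable_imp_continuous_within) auto
  note closure = concave_on_Icc_iff_Ioo[OF virt_val_inv_less[OF assms] this[unfolded K_def]]
    convex_on_Icc_iff_Ioo[OF virt_val_inv_less[OF assms] this[unfolded K_def]]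
  show "concave_on {s..t} ?h \<longleftrightarrow> concave_on {?h s<..<?h t} (inv_hazard F f)"
    using inverse(1) closure(1) unfolding psi_eq convex_on_diff_ident_iff K_def by simp
  show "convex_on {s..t} ?h \<longleftrightarrow> convex_on {?h s<..<?h t} (inv_hazard F f)"
    using inverse(2) closure(2) unfolding psi_eq convex_on_diff_ident_iff K_def by simp
qed

end

theorem lemma10:
  fixes F f :: "real \<Rightarrow> real" and ql qh c :: real
  assumes "0 < ql" "ql < qh" "0 < c" "c < ql"
    and F_cont: "continuous_on UNIV F"
    and F_below: "\<And>x. x \<le> 0 \<Longrightarrow> F x = 0"
    and F_above: "\<And>x. 1 \<le> x \<Longrightarrow> F x = 1"
    and F_dens: "\<And>x. x \<in> {0<..<1} \<Longrightarrow> (F has_real_derivative f x) (at x)"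
    and f_pos: "\<And>x. x \<in> {0<..<1} \<Longrightarrow> f x > 0"
    and f_C2: "C2_on {0<..<1} f"
    and psi_incr: "\<And>v. v \<in> {0<..<1} \<Longrightarrow> virt_val F f v > 0 \<Longrightarrow> deriv (virt_val F f) v > 0"
  shows "(concave_on {ql..qh} (opt_price F c) \<longleftrightarrow>
            concave_on {norm_price F c qh<..<norm_price F c ql} (inv_hazard F f))
       \<and> (convex_on {ql..qh} (opt_price F c) \<longleftrightarrow>
            convex_on {norm_price F c qh<..<norm_price F c ql} (inv_hazard F f))"
proof -
  interpret regular_distribution F f
    by unfold_locales (fact F_cont F_below F_above F_dens f_pos f_C2 psi_incr)+
  have "0 < c / qh" "c / qh < c / ql" "c / ql < 1"
    using assms(1-4) by (simp_all add: divide_strict_left_mono)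
  note inverse = concave_on_virt_val_inv_iff[OF this]
  let ?p = "\<lambda>q. q * virt_val_inv F f (c / q)"
  have price: "opt_price F c q = ?p q" if "q \<in> {ql..qh}" for q
    using that assms(1-4) by (simp add: opt_price_eq_virt_val_inv)
  have "norm_price F c qh = virt_val_inv F f (c / qh)"
    and "norm_price F c ql = virt_val_inv F f (c / ql)"
    using assms(1-4) by (simp_all add: norm_price_eq_virt_val_inv)
  moreover have "concave_on {ql..qh} (opt_price F c) \<longleftrightarrow>
      concave_on {c/qh..c/ql} (virt_val_inv F f)"
    using concave_on_cong[of "{ql..qh}" "opt_price F c" ?p, OF price]
      concave_on_perspective_iff[of c ql qh] assms(1-3) by simp
  moreover have "convex_on {ql..qh} (opt_price F c) \<longleftrightarrow>
      convex_on {c/qh..c/ql} (virt_val_inv F f)"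
    using convex_on_cong[of "{ql..qh}" "opt_price F c" ?p, OF price]
      convex_on_perspective_iff[of c ql qh] assms(1-3) by simp
  ultimately show ?thesis using inverse by simp
qed

end
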